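(* Let $p,q\ge1$, $N\ge1$, and let $\mu$ be a $q\times p$ matrix of measures. Assume that $\mathscr M_N$, $\mathscr M_{N,(b,0)}$ ($b\in\{1,\dots,q\}$) and $\mathscr M_{N,(0,a)}$ ($a\in\{1,\dots,p\}$) admit Gauss--Borel factorizations $\mathscr M_{N,(n,m)}=\mathscr L_{N,(n,m)}^{-1}\mathscr U_{N,(n,m)}^{-1}$ with lower unitriangular $\mathscr L_{N,(n,m)}$, let $U_b:=\mathscr U_{N,(b,0)}^{-1}\mathscr U_{N,(b-1,0)}$ and $L_a:=\mathscr L_{N,(0,a-1)}\mathscr L_{N,(0,a)}^{-1}$, and write $U_{b,n}:=(U_b)_{n,n}$, $L_{a,n}:=(L_a)_{n,n-1}$. Then for $a\in\{1,\dots,p\}$, $b\in\{1,\dots,q\}$: \[L_{a,n}=(\mathscr L_{N,(0,a-1)})_{n,n-1}-(\mathscr L_{N,(0,a)})_{n,n-1},\quad n\in\{1,\dots,N-1\},\] \[U_{b,n}=\frac{(\mathscr U_{N,(b-1,0)})_{n,n}}{(\mathscr U_{N,(b,0)})_{n,n}},\quad n\in\{0,\dots,N-1\},\] \[L_{a,n}=\frac{(\mathscr U_{N,(0,a)})_{n-1,n-1}}{(\mathscr U_{N,(0,a-1)})_{n,n}},\quad n\in\{1,\dots,N-1\},\] \[U_{b,n}=(1-\delta_{n,0})(\mathscr L_{N,(b,0)})_{n,n-1}-(\mathscr L_{N,(b-1,0)})_{n+1,n},\quad n\in\{0,\dots,N-2\}.\]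
   Context: All matrices are indexed from $0$. Fix integers $p,q\ge1$ and a $q\times p$ matrix $\mu$ of real measures on $\mathbb R$ with finite moments. For $r,n\ge1$, $X^{[n]}_{[r]}(x)$ is the $n\times r$ matrix whose row $k$ is $x^{\lfloor k/r\rfloor}e_{k\bmod r}^\top$ ($e_0,\dots,e_{r-1}$ standard basis of $\mathbb R^r$). Moment matrices: $\mathscr M^{[n,m]}=\int X^{[n]}_{[q]}\,\mathrm d\mu\,(X^{[m]}_{[p]})^\top$, $\mathscr M_n=\mathscr M^{[n,n]}$. $\mathfrak X_{[r,1]}(x)$ is the $r\times r$ matrix with $(\mathfrak X_{[r,1]})_{i,i+1}=1$ ($0\le i\le r-2$), $(\mathfrak X_{[r,1]})_{r-1,0}=x$, other entries $0$. Christoffel perturbations: $\mathrm d\mu_{(n,m)}:=\mathfrak X_{[q,1]}^n\,\mathrm d\mu\,(\mathfrak X_{[p,1]}^m)^\top$, with $\mathscr M_{N,(n,m)}$ the $N\times N$ moment matrix of $\mu_{(n,m)}$; $(n,m)=(0,0)$ gives $\mu$ itself, with factors $\mathscr L_N,\mathscr U_N$. *)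

theory Defs
  imports "HOL-Analysis.Analysis" "Jordan_Normal_Form.Matrix"
begin

text \<open>A real (signed) measure on the real line is represented by a pair of Borel
  measures (positive and negative part, e.g. its Jordan decomposition);
  integration against it is the difference of the two Lebesgue integrals.\<close>
type_synonym rmeas = "real measure \<times> real measure"

definition sint :: "rmeas \<Rightarrow> (real \<Rightarrow> real) \<Rightarrow> real" where
  "sint m f = integral\<^sup>L (fst m) f - integral\<^sup>L (snd m) f"

definition finite_moments_meas :: "rmeas \<Rightarrow> bool" where
  "finite_moments_meas m \<longleftrightarrow>
     sets (fst m) = sets borel \<and> sets (snd m) = sets borel \<and>
     (\<forall>k::nat. integrable (fst m) (\<lambda>x. x ^ k) \<and> integrable (snd m) (\<lambda>x. x ^ k))"

text \<open>A matrix of (generalised) measures is given by its entrywise integration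
  functionals: Phi i j f = \<integral> f d(mu_ij).\<close>
type_synonym mfun = "nat \<Rightarrow> nat \<Rightarrow> (real \<Rightarrow> real) \<Rightarrow> real"

definition meas_fun :: "(nat \<Rightarrow> nat \<Rightarrow> rmeas) \<Rightarrow> mfun" where
  "meas_fun mu = (\<lambda>i j f. sint (mu i j) f)"

definition Xmat :: "nat \<Rightarrow> nat \<Rightarrow> real \<Rightarrow> real mat" where
  "Xmat r n x = mat n r (\<lambda>(k, j). if j = k mod r then x ^ (k div r) else 0)"

definition Xfrak :: "nat \<Rightarrow> real \<Rightarrow> real mat" where
  "Xfrak r x = mat r r (\<lambda>(i, j). if j = i + 1 then 1
                                  else if i = r - 1 \<and> j = 0 then x else 0)"

definition mint :: "nat \<Rightarrow> nat \<Rightarrow> mfun \<Rightarrow> nat \<Rightarrow> nat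
                    \<Rightarrow> (real \<Rightarrow> real mat) \<Rightarrow> (real \<Rightarrow> real mat) \<Rightarrow> real mat" where
  "mint q p Phi n m A B = mat n m (\<lambda>(r, c).
      \<Sum>k<q. \<Sum>l<p. Phi k l (\<lambda>x. A x $$ (r, k) * B x $$ (c, l)))"

text \<open>Christoffel perturbation d\<mu>_(n,m) = \<frak>X_q^n d\<mu> (\<frak>X_p^m)^T, i.e. the
  (i,j) entry has polynomial density \<Sum>_{k,l} (\<frak>X_q^n)_{ik} (\<frak>X_p^m)_{jl} w.r.t. \<mu>_{kl}.\<close>
definition christoffel :: "nat \<Rightarrow> nat \<Rightarrow> mfun \<Rightarrow> nat \<Rightarrow> nat \<Rightarrow> mfun" where
  "christoffel q p Phi n m = (\<lambda>i j f.
      \<Sum>k<q. \<Sum>l<p. Phi k l (\<lambda>x. (Xfrak q x ^\<^sub>m n) $$ (i, k) * f x * (Xfrak p x ^\<^sub>m m) $$ (j, l)))"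

definition moment_mat :: "nat \<Rightarrow> nat \<Rightarrow> mfun \<Rightarrow> nat \<Rightarrow> nat \<Rightarrow> real mat" where
  "moment_mat q p Phi N M = mint q p Phi N M (Xmat q N) (Xmat p M)"

definition pert_moment :: "nat \<Rightarrow> nat \<Rightarrow> (nat \<Rightarrow> nat \<Rightarrow> rmeas) \<Rightarrow> nat \<Rightarrow> nat \<Rightarrow> nat \<Rightarrow> real mat" where
  "pert_moment q p mu N n m = moment_mat q p (christoffel q p (meas_fun mu) n m) N N"

definition minv :: "real mat \<Rightarrow> real mat" where
  "minv A = (THE B. B \<in> carrier_mat (dim_row A) (dim_row A) \<and>
                    A * B = 1\<^sub>m (dim_row A) \<and> B * A = 1\<^sub>m (dim_row A))"

definition lower_unitriangular :: "real mat \<Rightarrow> bool" where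
  "lower_unitriangular L \<longleftrightarrow>
     (\<forall>i<dim_row L. L $$ (i, i) = 1 \<and> (\<forall>j<dim_col L. i < j \<longrightarrow> L $$ (i, j) = 0))"

definition gauss_borel :: "nat \<Rightarrow> real mat \<Rightarrow> real mat \<Rightarrow> real mat \<Rightarrow> bool" where
  "gauss_borel N M L U \<longleftrightarrow>
     L \<in> carrier_mat N N \<and> U \<in> carrier_mat N N \<and>
     lower_unitriangular L \<and> upper_triangular U \<and> invertible_mat U \<and>
     M = minv L * minv U"

end

(*
  Two of the four identities only use that lower unitriangular matrices and invertible upper
  triangular matrices form groups: the inverse of a lower unitriangular matrix has the negated
  subdiagonal, the inverse of an upper triangular matrix has the reciprocal diagonal.

  The other two rest on how the Christoffel perturbation acts on moments.  Row k of
  X^[N]_[q](x) Xfrak_[q,1](x)^n is x^((k+n) div q) e_((k+n) mod q), the row k + n of the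
  unperturbed X, so the moment matrix of mu_(b,0) is that of mu_(b-1,0) with its first row
  removed, and the moment matrix of mu_(0,a) is that of mu_(0,a-1) with its first column removed.
  Hence in U_(b,0)^-1 U_(b-1,0) = L_(b,0) M_(b,0) U_(b-1,0) the factor M_(b,0) U_(b-1,0) is
  L_(b-1,0)^-1 shifted up by one row, and in L_(0,a-1) L_(0,a)^-1 = L_(0,a-1) M_(0,a) U_(0,a)
  the factor L_(0,a-1) M_(0,a) is U_(0,a-1)^-1 shifted left by one column; triangularity leaves
  at most two terms in each entry.

  The argument is purely algebraic.
*)

theory Submission
  imports Defs "Jordan_Normal_Form.Determinant"
begin

lemma index_mult_mat_sum:
  assumes "A \<in> carrier_mat n m" "B \<in> carrier_mat m k" "i < n" "j < k"
  shows "(A * B) $$ (i, j) = (\<Sum>l<m. A $$ (i, l) * B $$ (l, j))"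
  using assms by (simp add: scalar_prod_def lessThan_atLeast0)

lemma sum_eq_single:
  assumes "finite A" "a \<in> A" "\<And>x. x \<in> A \<Longrightarrow> x \<noteq> a \<Longrightarrow> f x = 0"
  shows "sum f A = f a"
  using sum.mono_neutral_left[of A "{a}" f] assms by simp

lemma sum_eq_pair:
  assumes "finite A" "a \<in> A" "b \<in> A" "a \<noteq> b"
    and "\<And>x. x \<in> A \<Longrightarrow> x \<noteq> a \<Longrightarrow> x \<noteq> b \<Longrightarrow> f x = 0"
  shows "sum f A = f a + f b"
  using sum.mono_neutral_left[of A "{a, b}" f] assms by simp

lemma Xfrak_power_entry:
  assumes "0 < q" "i < q" "k < q"
  shows "(Xfrak q x ^\<^sub>m n) $$ (i, k) = (if k = (i + n) mod q then x ^ ((i + n) div q) else 0)"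
  using assms(3)
proof (induction n arbitrary: k)
  case 0
  then show ?case using assms by (simp add: Xfrak_def)
next
  case (Suc n)
  define s where "s = (i + n) mod q"
  have X: "Xfrak q x \<in> carrier_mat q q" by (simp add: Xfrak_def)
  have s: "s < q" using assms s_def by simp
  have "(Xfrak q x ^\<^sub>m Suc n) $$ (i, k) = (\<Sum>j<q. (Xfrak q x ^\<^sub>m n) $$ (i, j) * Xfrak q x $$ (j, k))"
    using index_mult_mat_sum[OF pow_carrier_mat[OF X] X assms(2) Suc.prems] by simp
  also have "\<dots> = x ^ ((i + n) div q) * Xfrak q x $$ (s, k)"
    by (subst sum_eq_single[of _ s]) (use Suc.IH s s_def in auto)
  also have "\<dots> = (if k = (i + Suc n) mod q then x ^ ((i + Suc n) div q) else 0)"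
    using Suc.prems s by (cases "Suc s = q") (auto simp: Xfrak_def s_def mod_Suc div_Suc)
  finally show ?case .
qed

lemma Xmat_mult_Xfrak_power_entry:
  assumes "0 < q" "r < N" "k < q" "k' < q"
  shows "Xmat q N x $$ (r, k) * (Xfrak q x ^\<^sub>m n) $$ (k, k')
    = (if k = r mod q \<and> k' = (r + n) mod q then x ^ ((r + n) div q) else 0)"
proof -
  have "(r mod q + n) mod q = (r + n) mod q" by (simp add: mod_add_left_eq)
  moreover have "(r + n) div q = r div q + (r mod q + n) div q"
  proof -
    have "r + n = (r mod q + n) + r div q * q"
      using mod_div_mult_eq[of r q] by linarith
    then show ?thesis
      by (metis div_mult_self1 assms(1) less_irrefl)
  qed
  ultimately show ?thesis
    using assms by (auto simp: Xmat_def Xfrak_power_entry power_add[symmetric])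
qed

lemma sint_zero [simp]: "sint m (\<lambda>x. 0) = 0"
  by (simp add: sint_def)

lemma pert_moment_entry:
  assumes "0 < q" "0 < p" "r < N" "c < N"
  shows "pert_moment q p mu N n m $$ (r, c)
    = sint (mu ((r + n) mod q) ((c + m) mod p)) (\<lambda>x. x ^ ((r + n) div q) * x ^ ((c + m) div p))"
proof -
  define f where "f k l k' l' = (\<lambda>x. (Xfrak q x ^\<^sub>m n) $$ (k, k') * (Xmat q N x $$ (r, k) * Xmat p N x $$ (c, l))
      * (Xfrak p x ^\<^sub>m m) $$ (l, l'))" for k l k' l'
  \<comment> \<open>The tests are nested innermost summation index first, so that \<open>sum.delta\<close>
    collapses the four sums one after the other.\<close>
  have f: "sint (mu k' l') (f k l k' l')
    = (if l' = (c + m) mod p then if k' = (r + n) mod q then if l = c mod p then if k = r mod q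
       then sint (mu k' l') (\<lambda>x. x ^ ((r + n) div q) * x ^ ((c + m) div p)) else 0 else 0 else 0 else 0)"
    if "k < q" "l < p" "k' < q" "l' < p" for k l k' l'
  proof -
    have "f k l k' l' = (\<lambda>x. (Xmat q N x $$ (r, k) * (Xfrak q x ^\<^sub>m n) $$ (k, k'))
        * (Xmat p N x $$ (c, l) * (Xfrak p x ^\<^sub>m m) $$ (l, l')))"
      by (simp add: f_def mult_ac)
    then show ?thesis
      by (simp add: Xmat_mult_Xfrak_power_entry assms that)
  qed
  have "pert_moment q p mu N n m $$ (r, c) = (\<Sum>k<q. \<Sum>l<p. \<Sum>k'<q. \<Sum>l'<p. sint (mu k' l') (f k l k' l'))"
    using assms by (simp add: pert_moment_def moment_mat_def mint_def christoffel_def meas_fun_def f_def)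
  also have "\<dots> = sint (mu ((r + n) mod q) ((c + m) mod p)) (\<lambda>x. x ^ ((r + n) div q) * x ^ ((c + m) div p))"
    using assms by (simp add: f)
  finally show ?thesis .
qed

lemma pert_moment_row_shift:
  assumes "0 < q" "0 < p" "r + 1 < N" "c < N"
  shows "pert_moment q p mu N (Suc n) m $$ (r, c) = pert_moment q p mu N n m $$ (r + 1, c)"
  using assms by (simp add: pert_moment_entry)

lemma pert_moment_col_shift:
  assumes "0 < q" "0 < p" "r < N" "c + 1 < N"
  shows "pert_moment q p mu N n (Suc m) $$ (r, c) = pert_moment q p mu N n m $$ (r, c + 1)"
  using assms by (simp add: pert_moment_entry)

lemma mult_col_shift:
  assumes A: "A \<in> carrier_mat k N" and M: "M \<in> carrier_mat N N" and M': "M' \<in> carrier_mat N N"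
    and shift: "\<And>r. r < N \<Longrightarrow> M' $$ (r, c) = M $$ (r, c + 1)" and "i < k" "c + 1 < N"
  shows "(A * M') $$ (i, c) = (A * M) $$ (i, c + 1)"
proof -
  have "(A * M') $$ (i, c) = (\<Sum>l<N. A $$ (i, l) * M' $$ (l, c))"
    using index_mult_mat_sum[OF A M'] assms by simp
  also have "\<dots> = (\<Sum>l<N. A $$ (i, l) * M $$ (l, c + 1))"
    using shift by simp
  also have "\<dots> = (A * M) $$ (i, c + 1)"
    using index_mult_mat_sum[OF A M] assms by simp
  finally show ?thesis .
qed

lemma mult_row_shift:
  assumes M: "M \<in> carrier_mat N N" and M': "M' \<in> carrier_mat N N" and B: "B \<in> carrier_mat N k"
    and shift: "\<And>c. c < N \<Longrightarrow> M' $$ (r, c) = M $$ (r + 1, c)" and "r + 1 < N" "j < k"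
  shows "(M' * B) $$ (r, j) = (M * B) $$ (r + 1, j)"
proof -
  have "(M' * B) $$ (r, j) = (\<Sum>l<N. M' $$ (r, l) * B $$ (l, j))"
    using index_mult_mat_sum[OF M' B] assms by simp
  also have "\<dots> = (\<Sum>l<N. M $$ (r + 1, l) * B $$ (l, j))"
    using shift by simp
  also have "\<dots> = (M * B) $$ (r + 1, j)"
    using index_mult_mat_sum[OF M B] assms by simp
  finally show ?thesis .
qed

lemma minv_eqI:
  fixes A B :: "real mat"
  assumes A: "A \<in> carrier_mat n n" and B: "B \<in> carrier_mat n n" and AB: "A * B = 1\<^sub>m n"
  shows "minv A = B"
  unfolding minv_def
proof (rule the_equality)
  have BA: "B * A = 1\<^sub>m n"
    using A B AB by (rule mat_mult_left_right_inverse)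
  then show "B \<in> carrier_mat (dim_row A) (dim_row A) \<and> A * B = 1\<^sub>m (dim_row A) \<and> B * A = 1\<^sub>m (dim_row A)"
    using A B AB by simp
  fix C
  assume C: "C \<in> carrier_mat (dim_row A) (dim_row A) \<and> A * C = 1\<^sub>m (dim_row A) \<and> C * A = 1\<^sub>m (dim_row A)"
  then have "C = (B * A) * C"
    using A BA left_mult_one_mat[of C n n] by simp
  also have "\<dots> = B * (A * C)"
    using A B C by (simp add: assoc_mult_mat[of B n n A n C n])
  also have "\<dots> = B"
    using A B C by simp
  finally show "C = B" .
qed

lemma minv_inverse:
  assumes A: "A \<in> carrier_mat n n" and "invertible_mat A"
  shows "minv A \<in> carrier_mat n n" "A * minv A = 1\<^sub>m n" "minv A * A = 1\<^sub>m n"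
proof -
  obtain B where AB: "A * B = 1\<^sub>m n" and BA: "B * A = 1\<^sub>m (dim_row B)"
    using assms unfolding invertible_mat_def inverts_mat_def by auto
  have B: "B \<in> carrier_mat n n"
    using arg_cong[OF AB, of dim_col] arg_cong[OF BA, of dim_col] A by auto
  show "minv A \<in> carrier_mat n n" "A * minv A = 1\<^sub>m n" "minv A * A = 1\<^sub>m n"
    using minv_eqI[OF A B AB] B AB BA by auto
qed

lemma right_inverse_lower_triangular:
  fixes L B :: "'a::field mat"
  assumes L: "L \<in> carrier_mat n n" and B: "B \<in> carrier_mat n n" and LB: "L * B = 1\<^sub>m n"
    and lower: "\<And>i j. i < j \<Longrightarrow> j < n \<Longrightarrow> L $$ (i, j) = 0"
  shows "i < n \<Longrightarrow> L $$ (i, i) * B $$ (i, i) = 1"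
    and "i < j \<Longrightarrow> j < n \<Longrightarrow> B $$ (i, j) = 0"
proof -
  have "L $$ (i, i) * B $$ (i, i) = 1 \<and> (\<forall>j. i < j \<longrightarrow> j < n \<longrightarrow> B $$ (i, j) = 0)"
    if "i < n" for i
    using that
  proof (induction i rule: less_induct)
    case (less i)
    have B_zero: "B $$ (l, j) = 0" if "l < i" "i \<le> j" "j < n" for l j
      using less.IH[OF that(1) order.strict_trans[OF that(1) less.prems]] that by simp
    have row: "L $$ (i, i) * B $$ (i, j) = (if i = j then 1 else 0)" if "i \<le> j" "j < n" for j
    proof -
      have "(L * B) $$ (i, j) = (\<Sum>l<n. L $$ (i, l) * B $$ (l, j))"
        using index_mult_mat_sum[OF L B less.prems that(2)] .
      also have "\<dots> = L $$ (i, i) * B $$ (i, j)"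
      proof (rule sum_eq_single)
        fix l
        assume l: "l \<in> {..<n}" "l \<noteq> i"
        show "L $$ (i, l) * B $$ (l, j) = 0"
        proof (cases "l < i")
          case True
          then show ?thesis
            using B_zero[of l j] that by simp
        next
          case False
          then show ?thesis
            using lower[of i l] l by simp
        qed
      qed (use less.prems in auto)
      finally show ?thesis
        using LB less.prems that by simp
    qed
    then have diag: "L $$ (i, i) * B $$ (i, i) = 1"
      using less.prems by simp
    moreover have "B $$ (i, j) = 0" if "i < j" "j < n" for j
      using row[of j] that diag by auto
    ultimately show ?case
      by blast
  qed
  then show "i < n \<Longrightarrow> L $$ (i, i) * B $$ (i, i) = 1"
    and "i < j \<Longrightarrow> j < n \<Longrightarrow> B $$ (i, j) = 0"
    by auto
qed

lemma right_inverse_lower_triangular_subdiag: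
  fixes L B :: "'a::field mat"
  assumes L: "L \<in> carrier_mat n n" and B: "B \<in> carrier_mat n n" and LB: "L * B = 1\<^sub>m n"
    and lower: "\<And>i j. i < j \<Longrightarrow> j < n \<Longrightarrow> L $$ (i, j) = 0"
    and i: "0 < i" "i < n"
  shows "L $$ (i, i) * B $$ (i, i - 1) + L $$ (i, i - 1) * B $$ (i - 1, i - 1) = 0"
proof -
  have "0 = (L * B) $$ (i, i - 1)"
    using LB i by simp
  also have "\<dots> = (\<Sum>l<n. L $$ (i, l) * B $$ (l, i - 1))"
    using index_mult_mat_sum[OF L B] i by simp
  also have "\<dots> = L $$ (i, i) * B $$ (i, i - 1) + L $$ (i, i - 1) * B $$ (i - 1, i - 1)"
  proof (rule sum_eq_pair)
    fix l
    assume l: "l \<in> {..<n}" "l \<noteq> i" "l \<noteq> i - 1"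
    show "L $$ (i, l) * B $$ (l, i - 1) = 0"
    proof (cases "l < i")
      case True
      then have "l < i - 1" "i - 1 < n"
        using i l by arith+
      then show ?thesis
        using right_inverse_lower_triangular(2)[OF L B LB lower] by simp
    next
      case False
      then have "i < l" "l < n"
        using l by auto
      then show ?thesis
        using lower[of i l] by simp
    qed
  qed (use i in auto)
  finally show ?thesis
    by simp
qed

lemma lower_unitriangularD:
  assumes "lower_unitriangular L" "L \<in> carrier_mat n n"
  shows "i < n \<Longrightarrow> L $$ (i, i) = 1" and "i < j \<Longrightarrow> j < n \<Longrightarrow> L $$ (i, j) = 0"
  using assms by (auto simp: lower_unitriangular_def)

lemma lower_unitriangular_invertible:
  assumes L: "L \<in> carrier_mat n n" and "lower_unitriangular L"
  shows "invertible_mat L"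
proof -
  have "det L = prod_list (diag_mat L)"
    using assms by (intro det_lower_triangular) (auto simp: lower_unitriangular_def)
  also have "diag_mat L = map (\<lambda>i. 1) [0..<n]"
    using assms by (auto simp: diag_mat_def lower_unitriangular_def)
  finally have "det L \<noteq> 0"
    by (simp add: map_replicate_const)
  then have "L \<in> Units (ring_mat TYPE(real) n undefined)"
    by (rule det_non_zero_imp_unit[OF L])
  then obtain B where "B \<in> carrier_mat n n" "B * L = 1\<^sub>m n" "L * B = 1\<^sub>m n"
    unfolding Units_def ring_mat_simps by blast
  then show ?thesis
    using L unfolding invertible_mat_def inverts_mat_def by auto
qed

lemma lower_unitriangular_minv:
  assumes L: "L \<in> carrier_mat n n" and unit: "lower_unitriangular L"
  shows "lower_unitriangular (minv L)"
    and "\<And>i. 0 < i \<Longrightarrow> i < n \<Longrightarrow> minv L $$ (i, i - 1) = - L $$ (i, i - 1)"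
proof -
  note inv = minv_inverse[OF L lower_unitriangular_invertible[OF assms]]
  note lower = lower_unitriangularD(2)[OF unit L]
  have diag: "minv L $$ (i, i) = 1" if "i < n" for i
  proof -
    have "L $$ (i, i) * minv L $$ (i, i) = 1"
      by (rule right_inverse_lower_triangular(1)[OF L inv(1,2) _ that]) (rule lower)
    then show ?thesis
      using lower_unitriangularD(1)[OF unit L that] by simp
  qed
  have upper_zero: "minv L $$ (i, j) = 0" if "i < j" "j < n" for i j
    by (rule right_inverse_lower_triangular(2)[OF L inv(1,2) _ that]) (rule lower)
  show "lower_unitriangular (minv L)"
    using inv(1) diag upper_zero unfolding lower_unitriangular_def by auto
  show "minv L $$ (i, i - 1) = - L $$ (i, i - 1)" if "0 < i" "i < n" for i
  proof -
    have "L $$ (i, i) * minv L $$ (i, i - 1) + L $$ (i, i - 1) * minv L $$ (i - 1, i - 1) = 0"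
      by (rule right_inverse_lower_triangular_subdiag[OF L inv(1,2) _ that]) (rule lower)
    then show ?thesis
      using diag[of i] diag[of "i - 1"] lower_unitriangularD(1)[OF unit L, of i] that by simp
  qed
qed

lemma upper_triangular_minv:
  assumes U: "U \<in> carrier_mat n n" and upper: "upper_triangular U" and "invertible_mat U"
  shows "upper_triangular (minv U)"
    and "\<And>i. i < n \<Longrightarrow> minv U $$ (i, i) = 1 / U $$ (i, i)"
proof -
  note inv = minv_inverse[OF U \<open>invertible_mat U\<close>]
  have Ut: "transpose_mat U \<in> carrier_mat n n" and Vt: "transpose_mat (minv U) \<in> carrier_mat n n"
    using U inv(1) by auto
  have T: "transpose_mat U * transpose_mat (minv U) = 1\<^sub>m n"
    using transpose_mult[OF inv(1) U] inv(3) by simp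
  have lower: "transpose_mat U $$ (i, j) = 0" if "i < j" "j < n" for i j
    using upper U that by auto
  have diag: "U $$ (i, i) * minv U $$ (i, i) = 1" if "i < n" for i
  proof -
    have "transpose_mat U $$ (i, i) * transpose_mat (minv U) $$ (i, i) = 1"
      by (rule right_inverse_lower_triangular(1)[OF Ut Vt T _ that]) (rule lower)
    then show ?thesis
      using U inv(1) that by simp
  qed
  show "upper_triangular (minv U)"
  proof (rule upper_triangularI)
    fix i j
    assume ji: "j < i" "i < dim_row (minv U)"
    have "transpose_mat (minv U) $$ (j, i) = 0"
      by (rule right_inverse_lower_triangular(2)[OF Ut Vt T _ ji(1)]) (use ji inv(1) lower in auto)
    then show "minv U $$ (i, j) = 0"
      using ji inv(1) by simp
  qed
  show "minv U $$ (i, i) = 1 / U $$ (i, i)" if "i < n" for i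
  proof -
    have "U $$ (i, i) \<noteq> 0"
      using diag[OF that] by auto
    then show ?thesis
      using diag[OF that] by (simp add: eq_divide_eq mult.commute)
  qed
qed

lemma lower_unitriangular_mult_minv_subdiag:
  assumes A: "A \<in> carrier_mat n n" and B: "B \<in> carrier_mat n n"
    and "lower_unitriangular A" "lower_unitriangular B" and i: "0 < i" "i < n"
  shows "(A * minv B) $$ (i, i - 1) = A $$ (i, i - 1) - B $$ (i, i - 1)"
proof -
  have Binv: "minv B \<in> carrier_mat n n"
    using minv_inverse(1)[OF B lower_unitriangular_invertible[OF B \<open>lower_unitriangular B\<close>]] .
  note Binv_unit = lower_unitriangular_minv[OF B \<open>lower_unitriangular B\<close>]
  have "(A * minv B) $$ (i, i - 1) = (\<Sum>l<n. A $$ (i, l) * minv B $$ (l, i - 1))"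
    using index_mult_mat_sum[OF A Binv] i by simp
  also have "\<dots> = A $$ (i, i) * minv B $$ (i, i - 1) + A $$ (i, i - 1) * minv B $$ (i - 1, i - 1)"
  proof (rule sum_eq_pair)
    fix l
    assume "l \<in> {..<n}" "l \<noteq> i" "l \<noteq> i - 1"
    then have "l < i - 1 \<or> i < l" "l < n" "i - 1 < n"
      using i by auto
    then show "A $$ (i, l) * minv B $$ (l, i - 1) = 0"
      using i lower_unitriangularD(2)[OF Binv_unit(1) Binv, of l "i - 1"]
        lower_unitriangularD(2)[OF \<open>lower_unitriangular A\<close> A, of i l]
      by auto
  qed (use i in auto)
  also have "\<dots> = A $$ (i, i - 1) - B $$ (i, i - 1)"
    using i Binv_unit(2)[OF i] lower_unitriangularD(1)[OF Binv_unit(1) Binv, of "i - 1"]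
      lower_unitriangularD(1)[OF \<open>lower_unitriangular A\<close> A, of i] by simp
  finally show ?thesis .
qed

lemma upper_triangular_minv_mult_diag:
  assumes U: "U \<in> carrier_mat n n" and V: "V \<in> carrier_mat n n"
    and "upper_triangular U" "upper_triangular V" "invertible_mat V" and i: "i < n"
  shows "(minv V * U) $$ (i, i) = U $$ (i, i) / V $$ (i, i)"
proof -
  note Vinv = minv_inverse(1)[OF V \<open>invertible_mat V\<close>]
  note Vinv_upper = upper_triangular_minv[OF V \<open>upper_triangular V\<close> \<open>invertible_mat V\<close>]
  have "(minv V * U) $$ (i, i) = (\<Sum>l<n. minv V $$ (i, l) * U $$ (l, i))"
    using index_mult_mat_sum[OF Vinv U i i] .
  also have "\<dots> = minv V $$ (i, i) * U $$ (i, i)"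
  proof (rule sum_eq_single)
    fix l
    assume "l \<in> {..<n}" "l \<noteq> i"
    then show "minv V $$ (i, l) * U $$ (l, i) = 0"
    proof (cases "l < i")
      case True
      then show ?thesis
        using upper_triangularD[OF Vinv_upper(1), of l i] Vinv i by simp
    next
      case False
      then show ?thesis
        using upper_triangularD[OF \<open>upper_triangular U\<close>, of i l] U \<open>l \<in> {..<n}\<close> \<open>l \<noteq> i\<close> by simp
    qed
  qed (use i in auto)
  finally show ?thesis
    using Vinv_upper(2)[OF i] by simp
qed

text \<open>For \<open>n = 0\<close> the entry \<open>A $$ (n, n - 1)\<close> is the diagonal entry \<open>1\<close> (truncated
  subtraction), which the factor in front removes.\<close>

lemma lower_unitriangular_mult_shifted_minv_diag:
  assumes A: "A \<in> carrier_mat N N" and B: "B \<in> carrier_mat N N"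
    and A_unit: "lower_unitriangular A" and B_unit: "lower_unitriangular B" and n: "n + 1 < N"
  shows "(\<Sum>k\<le>n. A $$ (n, k) * minv B $$ (k + 1, n))
    = (if n = 0 then 0 else 1) * A $$ (n, n - 1) - B $$ (n + 1, n)"
proof -
  have Binv: "minv B \<in> carrier_mat N N"
    using minv_inverse(1)[OF B lower_unitriangular_invertible[OF B B_unit]] .
  note Binv_unit = lower_unitriangular_minv[OF B B_unit]
  show ?thesis
  proof (cases "n = 0")
    case True
    then show ?thesis
      using Binv_unit(2)[of 1] lower_unitriangularD(1)[OF A_unit A, of 0] n by simp
  next
    case False
    have "(\<Sum>k\<le>n. A $$ (n, k) * minv B $$ (k + 1, n))
        = A $$ (n, n - 1) * minv B $$ (n - 1 + 1, n) + A $$ (n, n) * minv B $$ (n + 1, n)"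
    proof (rule sum_eq_pair)
      fix k
      assume "k \<in> {..n}" "k \<noteq> n - 1" "k \<noteq> n"
      then have "k + 1 < n"
        by auto
      then show "A $$ (n, k) * minv B $$ (k + 1, n) = 0"
        using lower_unitriangularD(2)[OF Binv_unit(1) Binv, of "k + 1" n] n by simp
    qed (use False in auto)
    then show ?thesis
      using False n Binv_unit(2)[of "n + 1"] lower_unitriangularD(1)[OF Binv_unit(1) Binv, of n]
        lower_unitriangularD(1)[OF A_unit A, of n] by simp
  qed
qed

lemma gauss_borelD:
  assumes "gauss_borel N M L U"
  shows "L \<in> carrier_mat N N" "U \<in> carrier_mat N N" "lower_unitriangular L" "upper_triangular U"
    "invertible_mat U"
  using assms by (auto simp: gauss_borel_def)

locale gauss_borel_factorization =
  fixes N :: nat and M L U :: "real mat"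
  assumes factorization: "gauss_borel N M L U"
begin

lemmas L_carrier = gauss_borelD(1)[OF factorization]
  and U_carrier = gauss_borelD(2)[OF factorization]
  and L_unit = gauss_borelD(3)[OF factorization]
  and U_upper = gauss_borelD(4)[OF factorization]
  and U_invertible = gauss_borelD(5)[OF factorization]

lemmas L_inverse = minv_inverse[OF L_carrier lower_unitriangular_invertible[OF L_carrier L_unit]]
  and U_inverse = minv_inverse[OF U_carrier U_invertible]

lemma M_eq: "M = minv L * minv U"
  using factorization by (simp add: gauss_borel_def)

lemma M_carrier: "M \<in> carrier_mat N N"
  using M_eq L_inverse(1) U_inverse(1) by simp

lemma L_mult_M: "L * M = minv U"
proof -
  have "L * M = (L * minv L) * minv U"
    using M_eq L_carrier L_inverse(1) U_inverse(1) by (simp add: assoc_mult_mat[of L N N _ N _ N])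
  then show ?thesis
    using L_inverse(2) U_inverse(1) by simp
qed

lemma M_mult_U: "M * U = minv L"
proof -
  have "M * U = minv L * (minv U * U)"
    using M_eq U_carrier L_inverse(1) U_inverse(1) by (simp add: assoc_mult_mat[of _ N N _ N U N])
  then show ?thesis
    using L_inverse(1) U_inverse(3) by simp
qed

lemmas minv_U_upper_triangular = upper_triangular_minv(1)[OF U_carrier U_upper U_invertible]
  and minv_U_diag = upper_triangular_minv(2)[OF U_carrier U_upper U_invertible]

end

lemma gauss_borel_col_shift_subdiag:
  assumes "gauss_borel N M L U" "gauss_borel N M' L' U'"
    and shift: "\<And>r c. r < N \<Longrightarrow> c + 1 < N \<Longrightarrow> M' $$ (r, c) = M $$ (r, c + 1)"
    and n: "0 < n" "n < N"
  shows "(L * minv L') $$ (n, n - 1) = U' $$ (n - 1, n - 1) / U $$ (n, n)"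
proof -
  interpret g: gauss_borel_factorization N M L U
    using assms(1) by (rule gauss_borel_factorization.intro)
  interpret g': gauss_borel_factorization N M' L' U'
    using assms(2) by (rule gauss_borel_factorization.intro)
  have "L * minv L' = L * (M' * U')"
    using g'.M_mult_U by simp
  also have "\<dots> = (L * M') * U'"
    using g.L_carrier g'.M_carrier g'.U_carrier by (simp add: assoc_mult_mat[of _ N N _ N _ N])
  finally have factor: "L * minv L' = (L * M') * U'" .
  have LM': "(L * M') $$ (n, k) = minv U $$ (n, k + 1)" if "k + 1 < N" for k
    using mult_col_shift[OF g.L_carrier g.M_carrier g'.M_carrier] shift n that g.L_mult_M by simp
  have "(L * minv L') $$ (n, n - 1) = (\<Sum>k<N. (L * M') $$ (n, k) * U' $$ (k, n - 1))"
    using factor index_mult_mat_sum[of "L * M'" N N U' N] g.L_carrier g'.M_carrier g'.U_carrier n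
    by simp
  also have "\<dots> = (L * M') $$ (n, n - 1) * U' $$ (n - 1, n - 1)"
  proof (rule sum_eq_single)
    fix k
    assume "k \<in> {..<N}" "k \<noteq> n - 1"
    then consider "k < n - 1" | "n - 1 < k" "k < N"
      by fastforce
    then show "(L * M') $$ (n, k) * U' $$ (k, n - 1) = 0"
    proof cases
      case 1
      then show ?thesis
        using LM'[of k] upper_triangularD[OF g.minv_U_upper_triangular, of "k + 1" n] g.U_inverse(1) n
        by simp
    next
      case 2
      then show ?thesis
        using upper_triangularD[OF g'.U_upper, of "n - 1" k] g'.U_carrier by simp
    qed
  qed (use n in auto)
  also have "\<dots> = U' $$ (n - 1, n - 1) / U $$ (n, n)"
    using LM'[of "n - 1"] g.minv_U_diag[of n] n by simp
  finally show ?thesis .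
qed

lemma gauss_borel_row_shift_diag:
  assumes "gauss_borel N M L U" "gauss_borel N M' L' U'"
    and shift: "\<And>r c. r + 1 < N \<Longrightarrow> c < N \<Longrightarrow> M' $$ (r, c) = M $$ (r + 1, c)"
    and n: "n + 1 < N"
  shows "(minv U' * U) $$ (n, n) = (if n = 0 then 0 else 1) * L' $$ (n, n - 1) - L $$ (n + 1, n)"
proof -
  interpret g: gauss_borel_factorization N M L U
    using assms(1) by (rule gauss_borel_factorization.intro)
  interpret g': gauss_borel_factorization N M' L' U'
    using assms(2) by (rule gauss_borel_factorization.intro)
  have "minv U' * U = (L' * M') * U"
    using g'.L_mult_M by simp
  also have "\<dots> = L' * (M' * U)"
    using g.U_carrier g'.L_carrier g'.M_carrier by (simp add: assoc_mult_mat[of _ N N _ N _ N])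
  finally have factor: "minv U' * U = L' * (M' * U)" .
  have M'U: "(M' * U) $$ (k, n) = minv L $$ (k + 1, n)" if "k + 1 < N" for k
    using mult_row_shift[OF g.M_carrier g'.M_carrier g.U_carrier] shift n that g.M_mult_U by simp
  have "(minv U' * U) $$ (n, n) = (\<Sum>k<N. L' $$ (n, k) * (M' * U) $$ (k, n))"
    using factor index_mult_mat_sum[of L' N N "M' * U" N] g.U_carrier g'.L_carrier g'.M_carrier n
    by simp
  also have "\<dots> = (\<Sum>k\<le>n. L' $$ (n, k) * (M' * U) $$ (k, n))"
    using n lower_unitriangularD(2)[OF g'.L_unit g'.L_carrier, of n]
    by (intro sum.mono_neutral_right) auto
  also have "\<dots> = (\<Sum>k\<le>n. L' $$ (n, k) * minv L $$ (k + 1, n))"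
    using M'U n by (intro sum.cong) auto
  also have "\<dots> = (if n = 0 then 0 else 1) * L' $$ (n, n - 1) - L $$ (n + 1, n)"
    by (rule lower_unitriangular_mult_shifted_minv_diag[OF g'.L_carrier g.L_carrier g'.L_unit g.L_unit n])
  finally show ?thesis .
qed

theorem mainTheorem3:
  fixes p q N :: nat
    and mu :: "nat \<Rightarrow> nat \<Rightarrow> rmeas"
    and LL UU :: "nat \<Rightarrow> nat \<Rightarrow> real mat"
  assumes "p \<ge> 1" and "q \<ge> 1" and "N \<ge> 1"
    and "\<forall>i<q. \<forall>j<p. finite_moments_meas (mu i j)"
    and "gauss_borel N (pert_moment q p mu N 0 0) (LL 0 0) (UU 0 0)"
    and "\<forall>b\<in>{1..q}. gauss_borel N (pert_moment q p mu N b 0) (LL b 0) (UU b 0)"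
    and "\<forall>a\<in>{1..p}. gauss_borel N (pert_moment q p mu N 0 a) (LL 0 a) (UU 0 a)"
    and "a \<in> {1..p}" and "b \<in> {1..q}"
  shows
    "(\<forall>n\<in>{1..N-1}. (LL 0 (a-1) * minv (LL 0 a)) $$ (n, n-1)
        = LL 0 (a-1) $$ (n, n-1) - LL 0 a $$ (n, n-1))
   \<and> (\<forall>n\<in>{..<N}. (minv (UU b 0) * UU (b-1) 0) $$ (n, n)
        = UU (b-1) 0 $$ (n, n) / UU b 0 $$ (n, n))
   \<and> (\<forall>n\<in>{1..N-1}. (LL 0 (a-1) * minv (LL 0 a)) $$ (n, n-1)
        = UU 0 a $$ (n-1, n-1) / UU 0 (a-1) $$ (n, n))
   \<and> (\<forall>n\<in>{..<N-1}. (minv (UU b 0) * UU (b-1) 0) $$ (n, n)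
        = (if n = 0 then 0 else 1) * LL b 0 $$ (n, n-1) - LL (b-1) 0 $$ (n+1, n))"
proof -
  have q: "0 < q" and p: "0 < p" and a: "0 < a" "a \<le> p" and b: "0 < b" "b \<le> q"
    using assms(1,2,8,9) by auto
  have gb_col: "gauss_borel N (pert_moment q p mu N 0 k) (LL 0 k) (UU 0 k)" if "k \<le> p" for k
    using assms(5) assms(7)[rule_format, of k] that by (cases "k = 0") auto
  have gb_row: "gauss_borel N (pert_moment q p mu N k 0) (LL k 0) (UU k 0)" if "k \<le> q" for k
    using assms(5) assms(6)[rule_format, of k] that by (cases "k = 0") auto
  have gA: "gauss_borel N (pert_moment q p mu N 0 (a - 1)) (LL 0 (a - 1)) (UU 0 (a - 1))"
    "gauss_borel N (pert_moment q p mu N 0 a) (LL 0 a) (UU 0 a)"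
    using gb_col[of "a - 1"] gb_col[of a] a by simp_all
  have gB: "gauss_borel N (pert_moment q p mu N (b - 1) 0) (LL (b - 1) 0) (UU (b - 1) 0)"
    "gauss_borel N (pert_moment q p mu N b 0) (LL b 0) (UU b 0)"
    using gb_row[of "b - 1"] gb_row[of b] b by simp_all
  have col_shift: "pert_moment q p mu N 0 a $$ (r, c) = pert_moment q p mu N 0 (a - 1) $$ (r, c + 1)"
    if "r < N" "c + 1 < N" for r c
    using pert_moment_col_shift[OF q p that, of mu 0 "a - 1"] a by simp
  have row_shift: "pert_moment q p mu N b 0 $$ (r, c) = pert_moment q p mu N (b - 1) 0 $$ (r + 1, c)"
    if "r + 1 < N" "c < N" for r c
    using pert_moment_row_shift[OF q p that, of mu "b - 1" 0] b by simp
  show ?thesis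
    using lower_unitriangular_mult_minv_subdiag[OF gauss_borelD(1)[OF gA(1)] gauss_borelD(1)[OF gA(2)]
        gauss_borelD(3)[OF gA(1)] gauss_borelD(3)[OF gA(2)]]
      upper_triangular_minv_mult_diag[OF gauss_borelD(2)[OF gB(1)] gauss_borelD(2)[OF gB(2)]
        gauss_borelD(4)[OF gB(1)] gauss_borelD(4,5)[OF gB(2)]]
      gauss_borel_col_shift_subdiag[OF gA col_shift] gauss_borel_row_shift_diag[OF gB row_shift]
    by auto
qed

end
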